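(* Let $\lambda>0$, let $K\ge1$ be an integer, and let $1+\frac{1}{1+2K}\le\bar E^{max}\le2$. Set $\pi_0^*=\bar E^{max}-1$ and $k^*=\lfloor(\frac{1}{\pi_0^*}-1)/2\rfloor$. Assume $k^*+1\le K$ and $\rho^*_{k^*+1}:=\frac{1}{\pi_0^*}-1-2k^*>0$. Define the rates $$\lambda_k^*=\begin{cases}2\lambda & k=0,\\ \lambda & 1\le k\le k^*,\\ 0 & k^*+1\le k\le K,\end{cases}\qquad \mu_k^*=\begin{cases}\lambda & k\ne k^*+1,\\ \dfrac{2\lambda}{\rho^*_{k^*+1}} & k=k^*+1.\end{cases}$$ Equivalently, define the ENC parameters $$g_k^*=\begin{cases}0 & k\le k^*,\\ 1 & k^*+1\le k\le K,\end{cases}\qquad f_k^*=\begin{cases}\dfrac{2\lambda}{\rho^*_{k^*+1}}-\lambda & k=k^*+1,\\ 0 & k\ne k^*+1.\end{cases}$$ Then these rates are feasible for Problem 1 (in particular $\mu_k^*\ge\lambda$ and $\lambda_K^*=0$), the resulting stationary distribution satisfies $\pi_0=\pi_0^*$, and the average delay $$D=\frac{1}{2\lambda}\sum_k k\pi_k$$ equals the optimal value $$\frac{k^*+1}{2\lambda}\bigl[1-(\bar E^{max}-1)(k^*+1)\bigr].$$ Hence these parameters are optimal for Problem 1.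
   Context: ENC parameters are $g_0,\dots,g_K\in[0,1]$ and $f_1,\dots,f_K\ge0$. They determine the rates $$\lambda_0=2\lambda(1-g_0),\qquad \lambda_k=\lambda(1-g_k)\ (1\le k\le K),\qquad \mu_k=\lambda+f_k\ (1\le k\le K).$$ The buffer is the birth–death chain on $\{0,\dots,K\}$ with birth rates $\lambda_k$ and death rates $\mu_k$. Its stationary distribution is $$\pi_k=\pi_0\prod_{m=0}^{k-1}\frac{\lambda_m}{\mu_{m+1}},\qquad \pi_0=\Bigl[1+\sum_{k=1}^{K}\prod_{m=0}^{k-1}\frac{\lambda_m}{\mu_{m+1}}\Bigr]^{-1}.$$ Problem 1 is the following: minimize $D=\frac{1}{2\lambda}\sum_{k=0}^K k\pi_k$ over rates satisfying $0\le\lambda_0\le2\lambda$, $0\le\lambda_k\le\lambda$ for $1\le k\le K-1$, $\lambda_K=0$, and $\mu_k\ge\lambda$, subject to $\pi_0+1\le\bar E^{max}$. *)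

theory Defs
  imports Complex_Main
begin

text \<open>Birth-death buffer chain on states 0..K with birth rates lam k and death rates mu k.\<close>

definition ratio_prod :: "(nat \<Rightarrow> real) \<Rightarrow> (nat \<Rightarrow> real) \<Rightarrow> nat \<Rightarrow> real" where
  "ratio_prod lam mu k = (\<Prod>m<k. lam m / mu (m + 1))"

definition stat_pi0 :: "nat \<Rightarrow> (nat \<Rightarrow> real) \<Rightarrow> (nat \<Rightarrow> real) \<Rightarrow> real" where
  "stat_pi0 K lam mu = 1 / (1 + (\<Sum>k\<in>{1..K}. ratio_prod lam mu k))"

definition stat_pi :: "nat \<Rightarrow> (nat \<Rightarrow> real) \<Rightarrow> (nat \<Rightarrow> real) \<Rightarrow> nat \<Rightarrow> real" where
  "stat_pi K lam mu k = stat_pi0 K lam mu * ratio_prod lam mu k"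

definition avg_delay :: "real \<Rightarrow> nat \<Rightarrow> (nat \<Rightarrow> real) \<Rightarrow> (nat \<Rightarrow> real) \<Rightarrow> real" where
  "avg_delay l K lam mu = 1 / (2 * l) * (\<Sum>k\<le>K. real k * stat_pi K lam mu k)"

definition feasible1 :: "real \<Rightarrow> nat \<Rightarrow> real \<Rightarrow> (nat \<Rightarrow> real) \<Rightarrow> (nat \<Rightarrow> real) \<Rightarrow> bool" where
  "feasible1 l K Emax lam mu \<longleftrightarrow>
     0 \<le> lam 0 \<and> lam 0 \<le> 2 * l \<and>
     (\<forall>k\<in>{1..K-1}. 0 \<le> lam k \<and> lam k \<le> l) \<and>
     lam K = 0 \<and>
     (\<forall>k\<in>{1..K}. mu k \<ge> l) \<and>
     stat_pi0 K lam mu + 1 \<le> Emax"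

definition enc_lam :: "real \<Rightarrow> (nat \<Rightarrow> real) \<Rightarrow> nat \<Rightarrow> real" where
  "enc_lam l g k = (if k = 0 then 2 * l * (1 - g 0) else l * (1 - g k))"

definition enc_mu :: "real \<Rightarrow> (nat \<Rightarrow> real) \<Rightarrow> nat \<Rightarrow> real" where
  "enc_mu l f k = l + f k"

end

theory Submission
  imports Defs
begin

text \<open>Write \<open>r\<^sub>k\<close> for the ratio products and \<open>S = \<Sum>r\<^sub>k\<close>, \<open>T = \<Sum>k r\<^sub>k\<close> (over \<open>1..K\<close>), so that
  \<open>\<pi>\<^sub>0 = 1/(1+S)\<close> and \<open>D = T/(2\<lambda>(1+S))\<close>. The rate bounds force \<open>0 \<le> r\<^sub>k \<le> 2\<close>, and then for
  every \<open>n \<le> K\<close> one has \<open>T \<ge> (n+1) S - n(n+1)\<close>, with equality exactly when \<open>r\<^sub>k = 2\<close> for \<open>k \<le> n\<close>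
  and \<open>r\<^sub>k = 0\<close> for \<open>k > n+1\<close>. Together with \<open>1/(1+S) \<le> \<pi>\<^sup>*\<^sub>0\<close> this gives
  \<open>D \<ge> (n+1)(1 - \<pi>\<^sup>*\<^sub>0(n+1))/(2\<lambda>)\<close>. The threshold policy of the theorem attains the bound for
  \<open>n = k\<^sup>*\<close>: its ratio products are \<open>2,\<dots>,2,\<rho>,0,\<dots>,0\<close>, and \<open>\<rho>\<close> is chosen so that \<open>1+S = 1/\<pi>\<^sup>*\<^sub>0\<close>.\<close>

lemma ratio_prod_0 [simp]: "ratio_prod lam mu 0 = 1"
  by (simp add: ratio_prod_def)

lemma ratio_prod_Suc: "ratio_prod lam mu (Suc k) = ratio_prod lam mu k * (lam k / mu (Suc k))"
  by (simp add: ratio_prod_def prod.lessThan_Suc)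

lemma ratio_prod_feasible_bounds:
  assumes l: "l > 0" and F: "feasible1 l K Emax lam mu" and k: "k \<in> {1..K}"
  shows "0 \<le> ratio_prod lam mu k \<and> ratio_prod lam mu k \<le> 2"
  using k
proof (induction k)
  case 0 then show ?case by simp
next
  case (Suc k)
  have mu: "l \<le> mu (Suc k)" using F Suc.prems unfolding feasible1_def by auto
  show ?case
  proof (cases "k = 0")
    case True
    have "0 \<le> lam 0" "lam 0 \<le> 2 * l" using F unfolding feasible1_def by auto
    moreover from mu True have "l \<le> mu 1" by simp
    ultimately have "lam 0 / mu 1 \<le> 2" "0 \<le> lam 0 / mu 1"
      using l by (simp_all add: divide_le_eq)
    with True show ?thesis by (simp add: ratio_prod_Suc)
  next
    case False
    then have IH: "0 \<le> ratio_prod lam mu k" "ratio_prod lam mu k \<le> 2" using Suc by auto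
    have "k \<in> {1..K-1}" using False Suc.prems by auto
    then have "0 \<le> lam k" "lam k \<le> l" using F unfolding feasible1_def by auto
    with mu l have q: "0 \<le> lam k / mu (Suc k)" "lam k / mu (Suc k) \<le> 1" by auto
    have "ratio_prod lam mu k * (lam k / mu (Suc k)) \<le> 2 * 1"
      using IH q by (intro mult_mono) auto
    moreover have "0 \<le> ratio_prod lam mu k * (lam k / mu (Suc k))"
      using IH(1) q(1) by (rule mult_nonneg_nonneg)
    ultimately show ?thesis by (simp only: ratio_prod_Suc mult_1_right)
  qed
qed

lemma avg_delay_eq_ratio_sums:
  "avg_delay l K lam mu
     = (\<Sum>k\<in>{1..K}. real k * ratio_prod lam mu k) / (2 * l * (1 + (\<Sum>k\<in>{1..K}. ratio_prod lam mu k)))"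
proof -
  have "{..K} = insert 0 {1..K}" by auto
  then have "avg_delay l K lam mu
      = 1 / (2 * l) * stat_pi0 K lam mu * (\<Sum>k\<in>{1..K}. real k * ratio_prod lam mu k)"
    by (simp add: avg_delay_def stat_pi_def sum_distrib_left algebra_simps)
  then show ?thesis by (simp add: stat_pi0_def)
qed

lemma sum_twice_atLeastAtMost: "(\<Sum>k\<in>{1..n}. 2 * real k) = real n * (real n + 1)"
  by (induction n) (auto simp: algebra_simps sum.cl_ivl_Suc)

lemma sum_atLeastAtMost_restrict:
  assumes "n \<le> (K::nat)"
  shows "(\<Sum>k\<in>{1..K}. if k \<le> n then f k else 0) = (\<Sum>k\<in>{1..n}. (f k :: real))"
proof -
  have "(\<Sum>k\<in>{1..K}. if k \<le> n then f k else 0) = sum f {k\<in>{1..K}. k \<le> n}"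
    by (rule sum.inter_filter[symmetric]) simp
  also have "{k\<in>{1..K}. k \<le> n} = {1..n}" using assms by auto
  finally show ?thesis .
qed

lemma centred_moment_lower_bound:
  assumes n: "n \<le> K" and r: "\<And>k. k \<in> {1..K} \<Longrightarrow> 0 \<le> r k \<and> r k \<le> (2::real)"
  shows "(\<Sum>k\<in>{1..K}. real k * r k) \<ge> (real n + 1) * (\<Sum>k\<in>{1..K}. r k) - real n * (real n + 1)"
proof -
  have "(\<Sum>k\<in>{1..K}. if k \<le> n then 2 * (real k - (real n + 1)) else 0)
      \<le> (\<Sum>k\<in>{1..K}. (real k - (real n + 1)) * r k)"
  proof (rule sum_mono)
    fix k assume k: "k \<in> {1..K}"
    show "(if k \<le> n then 2 * (real k - (real n + 1)) else 0) \<le> (real k - (real n + 1)) * r k"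
    proof (cases "k \<le> n")
      case True
      then have "(real k - (real n + 1)) * 2 \<le> (real k - (real n + 1)) * r k"
        using r[OF k] by (intro mult_left_mono_neg) auto
      with True show ?thesis by (simp add: mult.commute)
    qed (use r[OF k] in simp)
  qed
  also have "(\<Sum>k\<in>{1..K}. (real k - (real n + 1)) * r k)
      = (\<Sum>k\<in>{1..K}. real k * r k) - (real n + 1) * (\<Sum>k\<in>{1..K}. r k)"
    by (simp add: algebra_simps sum_subtractf sum_distrib_left)
  moreover have "(\<Sum>k\<in>{1..K}. if k \<le> n then 2 * (real k - (real n + 1)) else 0)
      = (\<Sum>k\<in>{1..n}. 2 * real k - 2 * (real n + 1))"
    using sum_atLeastAtMost_restrict[OF n] by (simp add: algebra_simps)
  moreover have "\<dots> = - (real n * (real n + 1))"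
    by (simp only: sum_subtractf sum_twice_atLeastAtMost) (simp add: algebra_simps)
  ultimately show ?thesis by linarith
qed

lemma avg_delay_lower_bound:
  assumes l: "l > 0" and F: "feasible1 l K Emax lam mu" and n: "n \<le> K"
  shows "(real n + 1) / (2 * l) * (1 - (Emax - 1) * (real n + 1)) \<le> avg_delay l K lam mu"
proof -
  define S where "S = (\<Sum>k\<in>{1..K}. ratio_prod lam mu k)"
  define T where "T = (\<Sum>k\<in>{1..K}. real k * ratio_prod lam mu k)"
  have r: "\<And>k. k \<in> {1..K} \<Longrightarrow> 0 \<le> ratio_prod lam mu k \<and> ratio_prod lam mu k \<le> 2"
    using ratio_prod_feasible_bounds[OF l F] .
  have S0: "0 \<le> S" unfolding S_def using r by (intro sum_nonneg) auto
  have "1 / (1 + S) \<le> Emax - 1" using F by (simp add: feasible1_def stat_pi0_def S_def)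
  moreover have "0 < 1 / (1 + S)" using S0 by simp
  ultimately have pS: "1 \<le> (Emax - 1) * (1 + S)"
    using S0 by (simp add: field_simps)
  have TS: "(real n + 1) * S - real n * (real n + 1) \<le> T"
    unfolding S_def T_def using centred_moment_lower_bound[OF n r] .
  have "(real n + 1) * (1 - (Emax - 1) * (real n + 1)) * (1 + S)
      = (real n + 1) * S - real n * (real n + 1) + (real n + 1)^2 * (1 - (Emax - 1) * (1 + S))"
    by (simp add: algebra_simps power2_eq_square)
  also have "\<dots> \<le> T"
    using TS mult_nonneg_nonpos[OF zero_le_power2[of "real n + 1"], of "1 - (Emax - 1) * (1 + S)"] pS
    by linarith
  finally have "(real n + 1) * (1 - (Emax - 1) * (real n + 1)) \<le> T / (1 + S)"
    using S0 by (simp add: field_simps)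
  then have "(real n + 1) * (1 - (Emax - 1) * (real n + 1)) / (2 * l) \<le> T / (1 + S) / (2 * l)"
    by (rule divide_right_mono) (use l in simp)
  also have "\<dots> = avg_delay l K lam mu"
    by (simp add: avg_delay_eq_ratio_sums S_def T_def mult.commute)
  finally show ?thesis by simp
qed

definition threshold_lam :: "real \<Rightarrow> nat \<Rightarrow> nat \<Rightarrow> real" where
  "threshold_lam l n k = (if k = 0 then 2 * l else if k \<le> n then l else 0)"

definition threshold_mu :: "real \<Rightarrow> nat \<Rightarrow> real \<Rightarrow> nat \<Rightarrow> real" where
  "threshold_mu l n rho k = (if k = n + 1 then 2 * l / rho else l)"

definition threshold_profile :: "nat \<Rightarrow> real \<Rightarrow> nat \<Rightarrow> real" where
  "threshold_profile n rho k =
     (if k = 0 then 1 else if k \<le> n then 2 else if k = n + 1 then rho else 0)"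

lemma ratio_prod_threshold:
  assumes "l \<noteq> 0" and "rho \<noteq> 0"
  shows "ratio_prod (threshold_lam l n) (threshold_mu l n rho) k = threshold_profile n rho k"
proof (induction k)
  case 0 then show ?case by (simp add: threshold_profile_def)
next
  case (Suc k)
  then show ?case
    using assms by (auto simp: ratio_prod_Suc threshold_profile_def threshold_lam_def threshold_mu_def)
qed

lemma sum_threshold_profile:
  assumes "n + 1 \<le> K"
  shows "(\<Sum>k\<in>{1..K}. w k * threshold_profile n rho k)
           = (\<Sum>k\<in>{1..n}. 2 * w k) + w (n + 1) * rho"
proof -
  have "(\<Sum>k\<in>{1..K}. w k * threshold_profile n rho k)
      = (\<Sum>k\<in>{1..Suc n}. w k * threshold_profile n rho k)"
    using assms by (intro sum.mono_neutral_right) (auto simp: threshold_profile_def)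
  also have "\<dots> = (\<Sum>k\<in>{1..n}. w k * threshold_profile n rho k) + w (n + 1) * rho"
    by (simp add: sum.cl_ivl_Suc threshold_profile_def)
  also have "(\<Sum>k\<in>{1..n}. w k * threshold_profile n rho k) = (\<Sum>k\<in>{1..n}. 2 * w k)"
    by (intro sum.cong) (auto simp: threshold_profile_def)
  finally show ?thesis .
qed

lemma threshold_policy_values:
  assumes "l \<noteq> 0" "rho \<noteq> 0" and K: "n + 1 \<le> K" and p: "p * (1 + 2 * real n + rho) = 1"
  shows "stat_pi0 K (threshold_lam l n) (threshold_mu l n rho) = p"
    and "avg_delay l K (threshold_lam l n) (threshold_mu l n rho)
           = (real n + 1) / (2 * l) * (1 - p * (real n + 1))"
proof -
  have S: "(\<Sum>k\<in>{1..K}. ratio_prod (threshold_lam l n) (threshold_mu l n rho) k) = 2 * real n + rho"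
    using sum_threshold_profile[OF K, of "\<lambda>_. 1"] by (simp add: ratio_prod_threshold[OF assms(1,2)])
  have T: "(\<Sum>k\<in>{1..K}. real k * ratio_prod (threshold_lam l n) (threshold_mu l n rho) k)
      = (real n + 1) * (real n + rho)"
    using sum_threshold_profile[OF K, of real]
    by (simp only: ratio_prod_threshold[OF assms(1,2)] sum_twice_atLeastAtMost)
      (simp add: algebra_simps)
  have "p \<noteq> 0" using p by auto
  with p have total: "1 + (2 * real n + rho) = 1 / p" by (simp add: field_simps)
  then show "stat_pi0 K (threshold_lam l n) (threshold_mu l n rho) = p"
    unfolding stat_pi0_def S by simp
  have "p * (real n + rho) = 1 - p * (real n + 1)" using p by (simp add: algebra_simps)
  then show "avg_delay l K (threshold_lam l n) (threshold_mu l n rho)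
           = (real n + 1) / (2 * l) * (1 - p * (real n + 1))"
    unfolding avg_delay_eq_ratio_sums S T total by (simp add: mult.commute)
qed

lemma feasible_threshold:
  assumes l: "l > 0" and rho: "0 < rho" "rho \<le> 2" and K: "n + 1 \<le> K"
    and pi0: "stat_pi0 K (threshold_lam l n) (threshold_mu l n rho) + 1 \<le> Emax"
  shows "feasible1 l K Emax (threshold_lam l n) (threshold_mu l n rho)"
proof -
  have "l \<le> 2 * l / rho" using l rho by (simp add: field_simps)
  with l K pi0 show ?thesis
    by (auto simp: feasible1_def threshold_lam_def threshold_mu_def)
qed

lemma twice_floor_half_remainder:
  fixes x :: real
  assumes "0 \<le> x"
  shows "x - 2 * real (nat \<lfloor>x / 2\<rfloor>) < 2"
proof -
  have "x / 2 < of_int \<lfloor>x / 2\<rfloor> + 1" by linarith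
  moreover have "real (nat \<lfloor>x / 2\<rfloor>) = of_int \<lfloor>x / 2\<rfloor>" using assms by simp
  ultimately show ?thesis by linarith
qed

theorem mainTheorem5:
  fixes l Emax pstar rho :: real and K kstar :: nat
    and lamS muS gS fS :: "nat \<Rightarrow> real"
  assumes l_pos: "l > 0"
    and K_ge: "K \<ge> 1"
    and E_lo: "1 + 1 / (1 + 2 * real K) \<le> Emax" and E_hi: "Emax \<le> 2"
    and pstar_def: "pstar = Emax - 1"
    and kstar_def: "kstar = nat \<lfloor>(1 / pstar - 1) / 2\<rfloor>"
    and kstar_K: "kstar + 1 \<le> K"
    and rho_def: "rho = 1 / pstar - 1 - 2 * real kstar"
    and rho_pos: "rho > 0"
    and lamS_def: "\<And>k. lamS k = (if k = 0 then 2 * l else if k \<le> kstar then l else 0)"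
    and muS_def: "\<And>k. muS k = (if k = kstar + 1 then 2 * l / rho else l)"
    and gS_def: "\<And>k. gS k = (if k \<le> kstar then 0 else 1)"
    and fS_def: "\<And>k. fS k = (if k = kstar + 1 then 2 * l / rho - l else 0)"
  shows "(\<forall>k\<le>K. 0 \<le> gS k \<and> gS k \<le> 1) \<and> (\<forall>k\<in>{1..K}. fS k \<ge> 0)
       \<and> (\<forall>k\<le>K. enc_lam l gS k = lamS k) \<and> (\<forall>k\<in>{1..K}. enc_mu l fS k = muS k)
       \<and> feasible1 l K Emax lamS muS
       \<and> (\<forall>k\<in>{1..K}. muS k \<ge> l) \<and> lamS K = 0
       \<and> stat_pi0 K lamS muS = pstar
       \<and> avg_delay l K lamS muS
           = (real kstar + 1) / (2 * l) * (1 - (Emax - 1) * (real kstar + 1))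
       \<and> (\<forall>lam mu. feasible1 l K Emax lam mu \<longrightarrow> avg_delay l K lamS muS \<le> avg_delay l K lam mu)"
proof -
  have p: "0 < pstar" "pstar \<le> 1"
    using E_lo E_hi pstar_def by (auto intro: order.strict_trans2[rotated])
  have "0 \<le> 1 / pstar - 1" using p by simp
  from twice_floor_half_remainder[OF this] have "rho < 2"
    by (simp only: rho_def kstar_def)
  have total: "pstar * (1 + 2 * real kstar + rho) = 1"
    using p rho_def by (simp add: field_simps)
  have lam: "lamS = threshold_lam l kstar" and mu: "muS = threshold_mu l kstar rho"
    by (simp_all add: fun_eq_iff lamS_def muS_def threshold_lam_def threshold_mu_def)
  note policy = threshold_policy_values[OF _ _ kstar_K total, of l, folded lam mu]
  have pi0: "stat_pi0 K lamS muS = pstar" and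
    delay: "avg_delay l K lamS muS = (real kstar + 1) / (2 * l) * (1 - (Emax - 1) * (real kstar + 1))"
    using policy l_pos rho_pos pstar_def by auto
  have feas: "feasible1 l K Emax lamS muS"
    unfolding lam mu using l_pos rho_pos \<open>rho < 2\<close> kstar_K
    by (intro feasible_threshold) (auto simp: pi0[unfolded lam mu] pstar_def)
  have "l \<le> 2 * l / rho" using l_pos rho_pos \<open>rho < 2\<close> by (simp add: field_simps)
  moreover have "kstar \<le> K" using kstar_K by simp
  ultimately show ?thesis using feas pi0 delay avg_delay_lower_bound[OF l_pos]
    by (auto simp: feasible1_def gS_def fS_def enc_lam_def enc_mu_def lamS_def muS_def)
qed

end
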